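(* Let $\ell$ be a positive integer and let $p_1,\dots,p_\ell$ be integers with $j\le p_j\le j(j+1)$ for all $j$ such that the $\ell\times\ell$ matrix $A$ with $A_{ij}=C_{p_j}(i)$ ($i,j\in[\ell]$) is invertible. Let $\mathbf x^\star$ be the solution of $A\mathbf x=\mathbf y$ where $y_i=i$ for $i\in[\ell]$. Then $|x^\star_i|\le\ell^{O(\ell^4)}$ for all $i$.
   Context: For a positive integer $p$ and $y\ge0$, $C_p(y)=p\,(1-(1-1/p)^y)$. *)

theory Defs
  imports Complex_Main "Jordan_Normal_Form.Matrix"
begin

definition Cfun :: "nat \<Rightarrow> nat \<Rightarrow> real" where
  "Cfun p y = real p * (1 - (1 - 1 / real p) ^ y)"

text \<open>The l x l matrix A with A_{ij} = C_{p_j}(i), i,j in [l] (stored 0-indexed).\<close>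
definition Amat :: "nat \<Rightarrow> (nat \<Rightarrow> nat) \<Rightarrow> real mat" where
  "Amat l p = mat l l (\<lambda>(i, j). Cfun (p (j + 1)) (i + 1))"

definition yvec :: "nat \<Rightarrow> real vec" where
  "yvec l = vec l (\<lambda>i. real (i + 1))"

end

(*
  By Cramer's rule x_i = det A_i / det A, where A_i is A with column i replaced by y.
  Since 0 <= C_p(y) <= y, all entries of A_i lie in [0, l], so |det A_i| <= l! l^l.
  For the denominator, C_q(y+1) q^y = q^(y+1) - (q-1)^(y+1) is an integer, so scaling
  column j by p_j^(l-1) turns A into an integer matrix with nonzero determinant; hence
  |det A| * prod_j p_j^(l-1) >= 1, and p_j <= l(l+1) <= l^3 bounds this product by l^(3l(l-1)).
*)
theory Submission imports Defs "Jordan_Normal_Form.Determinant" begin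

lemma det_nonzero_if_invertible_mat:
  fixes A :: "'a::comm_ring_1 mat"
  assumes "invertible_mat A"
  shows "det A \<noteq> 0"
proof -
  obtain n where A: "A \<in> carrier_mat n n"
    using assms unfolding invertible_mat_def square_mat.simps by blast
  from assms obtain B where AB: "A * B = 1\<^sub>m n" and BA: "B * A = 1\<^sub>m (dim_row B)"
    unfolding invertible_mat_def inverts_mat_def using A by auto
  have "B \<in> carrier_mat n n"
    using arg_cong[OF AB, of dim_col] arg_cong[OF BA, of dim_col] A by auto
  with AB A have "det A * det B = 1" by (metis det_mult det_one)
  then show ?thesis by auto
qed

lemma det_in_Ints:
  assumes A: "A \<in> carrier_mat n n" and int: "\<And>i j. i < n \<Longrightarrow> j < n \<Longrightarrow> A $$ (i, j) \<in> \<int>"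
  shows "det A \<in> \<int>"
  unfolding det_def'[OF A] by (intro Ints_sum Ints_mult Ints_prod int) (auto intro: permutes_in_image)

lemma abs_det_le_fact_mult_power:
  fixes A :: "real mat"
  assumes A: "A \<in> carrier_mat n n" and b: "\<And>i j. i < n \<Longrightarrow> j < n \<Longrightarrow> \<bar>A $$ (i, j)\<bar> \<le> B"
  shows "\<bar>det A\<bar> \<le> fact n * B ^ n"
proof -
  have "\<bar>det A\<bar> \<le> (\<Sum>p\<in>{p. p permutes {0..<n}}. \<bar>signof p * (\<Prod>i = 0..<n. A $$ (i, p i))\<bar>)"
    unfolding det_def'[OF A] by (rule sum_abs)
  also have "\<dots> \<le> (\<Sum>p\<in>{p. p permutes {0..<n}}. B ^ n)"
  proof (rule sum_mono)
    fix p assume "p \<in> {p. p permutes {0..<n}}"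
    then have p: "p permutes {0..<n}" by simp
    have "\<bar>signof p * (\<Prod>i = 0..<n. A $$ (i, p i))\<bar> = (\<Prod>i = 0..<n. \<bar>A $$ (i, p i)\<bar>)"
      by (simp add: abs_mult abs_prod sign_def)
    also have "\<dots> \<le> (\<Prod>i = 0..<n. B)"
      by (rule prod_mono) (use b permutes_in_image[OF p] in auto)
    finally show "\<bar>signof p * (\<Prod>i = 0..<n. A $$ (i, p i))\<bar> \<le> B ^ n" by simp
  qed
  also have "\<dots> = fact n * B ^ n"
    using card_permutations[of "{0..<n}" n] by simp
  finally show ?thesis .
qed

lemma det_mult_cols:
  fixes A :: "'a::comm_ring_1 mat"
  assumes A: "A \<in> carrier_mat n n"
  shows "det (mat n n (\<lambda>(i, j). A $$ (i, j) * f j)) = det A * (\<Prod>j<n. f j)"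
proof -
  have "det (mat n n (\<lambda>(i, j). A $$ (i, j) * f j)) =
      (\<Sum>p\<in>{p. p permutes {0..<n}}. signof p * (\<Prod>i = 0..<n. A $$ (i, p i) * f (p i)))"
    by (subst det_def'[of _ n]) (auto intro!: sum.cong prod.cong permutes_in_image)
  also have "\<dots> = (\<Sum>p\<in>{p. p permutes {0..<n}}. signof p * (\<Prod>i = 0..<n. A $$ (i, p i)) * (\<Prod>j<n. f j))"
  proof (rule sum.cong[OF refl])
    fix p assume "p \<in> {p. p permutes {0..<n}}"
    then have "(\<Prod>i = 0..<n. f (p i)) = (\<Prod>j<n. f j)"
      using prod.permute[of p "{0..<n}" f] by (simp add: comp_def atLeast0LessThan)
    then show "signof p * (\<Prod>i = 0..<n. A $$ (i, p i) * f (p i)) =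
        signof p * (\<Prod>i = 0..<n. A $$ (i, p i)) * (\<Prod>j<n. f j)"
      by (simp add: prod.distrib mult.assoc)
  qed
  also have "\<dots> = det A * (\<Prod>j<n. f j)"
    by (simp add: det_def'[OF A] sum_distrib_right)
  finally show ?thesis .
qed

lemma one_le_abs_det_mult_prod_if_cols_scale_to_Ints:
  fixes A :: "real mat"
  assumes A: "A \<in> carrier_mat n n" and "det A \<noteq> 0" and "\<And>j. j < n \<Longrightarrow> s j \<noteq> 0"
    and int: "\<And>i j. i < n \<Longrightarrow> j < n \<Longrightarrow> A $$ (i, j) * s j \<in> \<int>"
  shows "1 \<le> \<bar>det A * (\<Prod>j<n. s j)\<bar>"
proof (rule Ints_nonzero_abs_ge1)
  show "det A * (\<Prod>j<n. s j) \<in> \<int>"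
    unfolding det_mult_cols[OF A, symmetric] by (rule det_in_Ints) (auto intro: int)
  show "det A * (\<Prod>j<n. s j) \<noteq> 0"
    using assms(2,3) by simp
qed

lemma abs_vec_index_le_by_cramer:
  fixes A :: "real mat"
  assumes A: "A \<in> carrier_mat n n" and x: "x \<in> carrier_vec n" and i: "i < n"
    and bound: "\<And>a b. a < n \<Longrightarrow> b < n \<Longrightarrow> \<bar>replace_col A (A *\<^sub>v x) i $$ (a, b)\<bar> \<le> B"
    and det: "1 \<le> \<bar>det A\<bar> * P"
  shows "\<bar>x $ i\<bar> \<le> fact n * B ^ n * P"
proof -
  have R: "replace_col A (A *\<^sub>v x) i \<in> carrier_mat n n"
    using A by (simp add: replace_col_def)
  have P: "P \<ge> 0"
  proof (rule ccontr)
    assume "\<not> P \<ge> 0"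
    then have "\<bar>det A\<bar> * P \<le> 0"
      by (simp add: mult_nonneg_nonpos)
    with det show False by simp
  qed
  have "\<bar>x $ i\<bar> \<le> \<bar>x $ i\<bar> * (\<bar>det A\<bar> * P)"
    using mult_left_mono[OF det, of "\<bar>x $ i\<bar>"] by simp
  also have "\<dots> = \<bar>det (replace_col A (A *\<^sub>v x) i)\<bar> * P"
    by (simp add: cramer_lemma_mat[OF A x i] abs_mult)
  also have "\<dots> \<le> fact n * B ^ n * P"
    using abs_det_le_fact_mult_power[OF R bound] P by (rule mult_right_mono)
  finally show ?thesis .
qed

lemma Cfun_nonneg:
  assumes "q > 0"
  shows "0 \<le> Cfun q y"
proof -
  have "(1 - 1 / real q) ^ y \<le> 1"
    using assms by (intro power_le_one) (auto simp: field_simps)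
  then show ?thesis unfolding Cfun_def by simp
qed

lemma Cfun_le:
  assumes "q > 0"
  shows "Cfun q y \<le> real y"
proof -
  have "1 + real y * (- (1 / real q)) \<le> (1 + - (1 / real q)) ^ y"
    by (rule Bernoulli_inequality) (use assms in \<open>auto simp: field_simps\<close>)
  then have "real q * (1 - (1 - 1 / real q) ^ y) \<le> real q * (real y / real q)"
    using assms by (intro mult_left_mono) auto
  then show ?thesis unfolding Cfun_def using assms by simp
qed

lemma Cfun_Suc_mult_power:
  assumes "q > 0"
  shows "Cfun q (Suc y) * real q ^ y = real q ^ Suc y - (real q - 1) ^ Suc y"
  using assms by (simp add: Cfun_def field_simps power_divide)

lemma Amat_carrier: "Amat l p \<in> carrier_mat l l"
  by (simp add: Amat_def)

lemma Amat_index: "a < l \<Longrightarrow> b < l \<Longrightarrow> Amat l p $$ (a, b) = Cfun (p (b + 1)) (a + 1)"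
  by (simp add: Amat_def)

lemma Amat_mult_power_in_Ints:
  assumes "a < l" "b < l" "p (b + 1) > 0"
  shows "Amat l p $$ (a, b) * real (p (b + 1)) ^ (l - 1) \<in> \<int>"
proof -
  define q where "q = p (b + 1)"
  have "real q ^ (l - 1) = real q ^ (l - 1 - a) * real q ^ a"
    using assms(1) by (simp flip: power_add)
  then have "Amat l p $$ (a, b) * real q ^ (l - 1) =
      real q ^ (l - 1 - a) * (real q ^ Suc a - (real q - 1) ^ Suc a)"
    using Cfun_Suc_mult_power[of q a] assms by (simp add: Amat_index q_def)
  also have "\<dots> \<in> \<int>"
    by (intro Ints_mult Ints_diff Ints_power) auto
  finally show ?thesis by (simp add: q_def)
qed

lemma power_le_cube_power:
  assumes "q \<le> l * (l + 1)"
  shows "real q ^ (l - 1) \<le> real l ^ (3 * (l - 1))"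
proof (cases "l \<le> 1")
  case False
  then have "2 * l \<le> l * l"
    by (intro mult_le_mono1) simp
  then have "l + 1 \<le> l * l"
    using False by linarith
  then have "q \<le> l ^ 3"
    using assms by (metis mult_le_mono2 order_trans power3_eq_cube mult.assoc)
  then have "real q ^ (l - 1) \<le> (real l ^ 3) ^ (l - 1)"
    by (intro power_mono) (auto simp flip: of_nat_power)
  then show ?thesis by (simp add: power_mult)
qed auto

lemma fact_mult_powers_le:
  assumes "1 \<le> l"
  shows "fact l * real l ^ l * real l ^ (3 * (l - 1) * l) \<le> real l ^ (5 * l ^ 4)"
proof -
  have "fact l * real l ^ l * real l ^ (3 * (l - 1) * l) \<le> real l ^ l * real l ^ l * real l ^ (3 * (l - 1) * l)"
    using fact_le_power[of l] by (intro mult_right_mono) auto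
  also have "\<dots> = real l ^ (l + l + 3 * (l - 1) * l)"
    by (simp only: power_add)
  also have "\<dots> \<le> real l ^ (5 * l ^ 4)"
  proof (rule power_increasing)
    have "l \<le> l ^ 4" "l * l \<le> l ^ 4"
      using assms power_increasing[of 1 4 l] power_increasing[of 2 4 l] by (auto simp: power2_eq_square)
    moreover have "(l - 1) * l \<le> l * l" by simp
    ultimately show "l + l + 3 * (l - 1) * l \<le> 5 * l ^ 4" by linarith
  qed (use assms in simp)
  finally show ?thesis .
qed

lemma bounds_if_between_index_and_pronic:
  fixes p :: "nat \<Rightarrow> nat"
  assumes p: "\<forall>j\<in>{1..l}. j \<le> p j \<and> p j \<le> j * (j + 1)" and b: "b < l"
  shows "0 < p (b + 1)" "p (b + 1) \<le> l * (l + 1)"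
proof -
  have "b + 1 \<in> {1..l}"
    using b by simp
  with p have "b + 1 \<le> p (b + 1) \<and> p (b + 1) \<le> (b + 1) * (b + 1 + 1)"
    by blast
  moreover have "(b + 1) * (b + 1 + 1) \<le> l * (l + 1)"
    using b by (intro mult_le_mono) auto
  ultimately show "0 < p (b + 1)" "p (b + 1) \<le> l * (l + 1)" by auto
qed

lemma abs_Amat_solution_le:
  assumes l: "1 \<le> l" and p: "\<forall>j\<in>{1..l}. j \<le> p j \<and> p j \<le> j * (j + 1)"
    and inv: "invertible_mat (Amat l p)" and x: "dim_vec x = l"
    and sol: "Amat l p *\<^sub>v x = yvec l" and i: "i < l"
  shows "\<bar>x $ i\<bar> \<le> real l ^ (5 * l ^ 4)"
proof -
  define A where "A = Amat l p"
  define P where "P = (\<Prod>b<l. real (p (b + 1)) ^ (l - 1))"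
  have A: "A \<in> carrier_mat l l"
    by (simp add: A_def Amat_carrier)
  have p_pos: "p (b + 1) > 0" and p_le: "p (b + 1) \<le> l * (l + 1)" if "b < l" for b
    using bounds_if_between_index_and_pronic[OF p that] by auto
  have "1 \<le> \<bar>det A * P\<bar>"
    unfolding P_def A_def
  proof (rule one_le_abs_det_mult_prod_if_cols_scale_to_Ints[OF Amat_carrier])
    show "det (Amat l p) \<noteq> 0"
      by (rule det_nonzero_if_invertible_mat[OF inv])
  qed (use p_pos Amat_mult_power_in_Ints in auto)
  moreover have "P \<ge> 0"
    unfolding P_def by (intro prod_nonneg) auto
  ultimately have det: "1 \<le> \<bar>det A\<bar> * P"
    by (simp add: abs_mult)
  have entries: "\<bar>replace_col A (A *\<^sub>v x) i $$ (a, b)\<bar> \<le> real l" if "a < l" "b < l" for a b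
  proof (cases "b = i")
    case True
    then show ?thesis
      using that A by (simp add: sol A_def replace_col_def yvec_def)
  next
    case False
    have "0 \<le> Cfun (p (b + 1)) (a + 1)" "Cfun (p (b + 1)) (a + 1) \<le> real (a + 1)"
      using Cfun_nonneg Cfun_le p_pos[OF that(2)] by blast+
    with False that A show ?thesis
      by (simp add: replace_col_def A_def Amat_index)
  qed
  have "\<bar>x $ i\<bar> \<le> fact l * real l ^ l * P"
    by (rule abs_vec_index_le_by_cramer[OF A _ i entries det]) (use x in auto)
  also have "P \<le> (\<Prod>b<l. real l ^ (3 * (l - 1)))"
    unfolding P_def by (intro prod_mono conjI power_le_cube_power p_le) auto
  then have "fact l * real l ^ l * P \<le> fact l * real l ^ l * real l ^ (3 * (l - 1) * l)"
    by (intro mult_left_mono) (auto simp: power_mult)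
  also have "\<dots> \<le> real l ^ (5 * l ^ 4)"
    by (rule fact_mult_powers_le[OF l])
  finally show ?thesis .
qed

theorem lemma11:
  "\<exists>c::real. c > 0 \<and>
     (\<forall>(l::nat) (p::nat \<Rightarrow> nat) (x::real vec).
        l \<ge> 1 \<longrightarrow>
        (\<forall>j\<in>{1..l}. j \<le> p j \<and> p j \<le> j * (j + 1)) \<longrightarrow>
        invertible_mat (Amat l p) \<longrightarrow>
        dim_vec x = l \<longrightarrow>
        Amat l p *\<^sub>v x = yvec l \<longrightarrow>
        (\<forall>i<l. \<bar>x $ i\<bar> \<le> real l powr (c * real l ^ 4)))"
proof (intro exI[of _ 5] conjI allI impI)
  fix l p x i
  assume l: "1 \<le> l" and hyps: "\<forall>j\<in>{1..l}. j \<le> p j \<and> p j \<le> j * (j + 1)"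
    "invertible_mat (Amat l p)" "dim_vec x = l" "Amat l p *\<^sub>v x = yvec l" "i < l"
  have "real l powr (5 * real l ^ 4) = real l powr real (5 * l ^ 4)"
    by simp
  also have "\<dots> = real l ^ (5 * l ^ 4)"
    using l by (intro powr_realpow) simp
  finally show "\<bar>x $ i\<bar> \<le> real l powr (5 * real l ^ 4)"
    using abs_Amat_solution_le[OF l hyps] by simp
qed simp

end
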